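(* Let $G=K^{n_{1},n_{2},\ldots,n_{k}}_{n}$ where $k\geq 2$, $n_i\ge1$ and $n=\sum_{i=1}^{k}n_{i}+1$. Then the distance characteristic polynomial of $G$ is $$P_{D}(\lambda)=\det(\lambda I-D(G))=(\lambda+1)^{n-k-1}\Big(\lambda-\sum_{i=1}^{k}\frac{n_{i}(2\lambda+1)}{\lambda+n_{i}+1}\Big)\prod_{i=1}^{k}(\lambda+n_{i}+1).$$
   Context: $D(G)$ is the distance matrix of $G$. $K^{n_{1},\ldots,n_{k}}_{n}$ denotes the graph on $n$ vertices having a vertex $v$ of degree $n-1$ such that $G-v$ is the disjoint union of complete graphs $K_{n_1},\dots,K_{n_k}$. *)

theory Defs
  imports "Jordan_Normal_Form.Determinant"
begin

definition is_walk :: "(nat \<Rightarrow> nat \<Rightarrow> bool) \<Rightarrow> nat list \<Rightarrow> bool" where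
  "is_walk E xs \<longleftrightarrow> xs \<noteq> [] \<and> (\<forall>i. Suc i < length xs \<longrightarrow> E (xs ! i) (xs ! Suc i))"

definition graph_dist :: "(nat \<Rightarrow> nat \<Rightarrow> bool) \<Rightarrow> nat \<Rightarrow> nat \<Rightarrow> nat" where
  "graph_dist E x y = (LEAST m. \<exists>xs. is_walk E xs \<and> hd xs = x \<and> last xs = y \<and> length xs = Suc m)"

definition distance_matrix :: "(nat \<Rightarrow> nat \<Rightarrow> bool) \<Rightarrow> nat \<Rightarrow> real mat" where
  "distance_matrix E n = mat n n (\<lambda>(i, j). real (graph_dist E i j))"

definition simple_graph_on :: "nat \<Rightarrow> (nat \<Rightarrow> nat \<Rightarrow> bool) \<Rightarrow> bool" where
  "simple_graph_on n E \<longleftrightarrow> (\<forall>x y. E x y \<longrightarrow> x < n \<and> y < n \<and> x \<noteq> y \<and> E y x)"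

definition is_K_graph :: "nat \<Rightarrow> nat \<Rightarrow> (nat \<Rightarrow> nat) \<Rightarrow> (nat \<Rightarrow> nat \<Rightarrow> bool) \<Rightarrow> bool" where
  "is_K_graph n k ns E \<longleftrightarrow> simple_graph_on n E \<and>
     (\<exists>v<n. (\<forall>u<n. u \<noteq> v \<longrightarrow> E v u) \<and>
       (\<exists>C :: nat \<Rightarrow> nat set.
          (\<forall>i\<in>{1..k}. C i \<subseteq> {0..<n} - {v} \<and> card (C i) = ns i) \<and>
          (\<forall>i\<in>{1..k}. \<forall>j\<in>{1..k}. i \<noteq> j \<longrightarrow> C i \<inter> C j = {}) \<and>
          (\<Union>i\<in>{1..k}. C i) = {0..<n} - {v} \<and>
          (\<forall>x\<in>{0..<n} - {v}. \<forall>y\<in>{0..<n} - {v}. x \<noteq> y \<longrightarrow>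
              (E x y \<longleftrightarrow> (\<exists>i\<in>{1..k}. x \<in> C i \<and> y \<in> C i)))))"

end

theory Submission
  imports Defs
begin

text \<open>Label the hub by 0 and the vertices of the clique \<open>K\<^sub>n\<^sub>i\<close> by \<open>i\<close>. The distance between
  two distinct vertices is 1 if they carry the same label or one of them is the hub, and 2
  otherwise, so it only depends on the labels. Hence \<open>\<lambda>I - D = (\<lambda> + 1)I + U W\<close>, where \<open>U\<close> is
  the \<open>n \<times> (k + 1)\<close> characteristic matrix of the labelling, and Sylvester's identity
  \<open>det (\<mu>I\<^sub>n + U W) = \<mu>\<^bsup>n - k - 1\<^esup> det (\<mu>I\<^sub>k\<^sub>+\<^sub>1 + W U)\<close> reduces the determinant to that of the
  \<open>(k + 1) \<times> (k + 1)\<close> quotient matrix. The quotient matrix is diagonal plus rank two, and the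
  matrix determinant lemma turns its determinant into a \<open>2 \<times> 2\<close> one.\<close>

lemma det_add_mult_right_inverse:
  fixes A B U W :: "'a :: idom mat"
  assumes A: "A \<in> carrier_mat n n" and B: "B \<in> carrier_mat n n" and AB: "A * B = 1\<^sub>m n"
    and U: "U \<in> carrier_mat n r" and W: "W \<in> carrier_mat r n"
  shows "det (A + U * W) = det A * det (1\<^sub>m r + W * B * U)"
proof -
  define M where "M = four_block_mat A (- U) W (1\<^sub>m r)"
  define L where "L = four_block_mat (1\<^sub>m n) U (0\<^sub>m r n) (1\<^sub>m r)"
  define R where "R = four_block_mat (1\<^sub>m n) (B * U) (0\<^sub>m r n) (1\<^sub>m r)"
  have M: "M \<in> carrier_mat (n + r) (n + r)" and L: "L \<in> carrier_mat (n + r) (n + r)"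
    and R: "R \<in> carrier_mat (n + r) (n + r)"
    unfolding M_def L_def R_def using A B U W by auto
  have "det L = 1" and "det R = 1" unfolding L_def R_def
    by (subst det_four_block_mat_lower_left_zero[of _ n _ r], use B U in auto)+
  have "L * M = four_block_mat (A + U * W) (0\<^sub>m n r) W (1\<^sub>m r)"
    unfolding L_def M_def using A U W by (subst mult_four_block_mat[of _ n n _ r], auto)
  then have "det M = det (A + U * W)"
    using det_mult[OF L M] \<open>det L = 1\<close> A U W
    by (simp add: det_four_block_mat_upper_right_zero[of _ n _ r])
  have "A * (B * U) = U"
    using A B U AB by (metis assoc_mult_mat left_mult_one_mat)
  then have "M * R = four_block_mat A (0\<^sub>m n r) W (1\<^sub>m r + W * B * U)"
    unfolding M_def R_def using A B U W
    by (subst mult_four_block_mat[of _ n n _ r], auto simp: assoc_mult_mat[of W r n B n U] comm_add_mat[of _ r r])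
  then have "det M = det A * det (1\<^sub>m r + W * B * U)"
    using det_mult[OF M R] \<open>det R = 1\<close> A B U W
    by (simp add: det_four_block_mat_upper_right_zero[of _ n _ r])
  with \<open>det M = det (A + U * W)\<close> show ?thesis by simp
qed

lemma det_mult_eq_0_if_inner_dim_less:
  fixes U W :: "'a :: comm_ring_1 mat"
  assumes U: "U \<in> carrier_mat n r" and W: "W \<in> carrier_mat r n" and "r < n"
  shows "det (U * W) = 0"
proof -
  \<comment> \<open>pad to square matrices; the padded \<open>W\<close> has a zero row\<close>
  define U' where "U' = mat n n (\<lambda>(i, j). if j < r then U $$ (i, j) else 0)"
  define W' where "W' = mat n n (\<lambda>(i, j). if i < r then W $$ (i, j) else 0)"
  have "U * W = U' * W'"
  proof (rule eq_matI)
    fix i j assume "i < dim_row (U' * W')" "j < dim_col (U' * W')"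
    then have ij: "i < n" "j < n" by (simp_all add: U'_def W'_def)
    have "(U' * W') $$ (i, j) = (\<Sum>t\<in>{0..<n}. if t < r then U $$ (i, t) * W $$ (t, j) else 0)"
      using ij by (auto simp: U'_def W'_def scalar_prod_def intro!: sum.cong)
    also have "\<dots> = (\<Sum>t\<in>{0..<n} \<inter> {t. t < r}. U $$ (i, t) * W $$ (t, j))"
      by (simp add: sum.inter_restrict)
    also have "\<dots> = (\<Sum>t\<in>{0..<r}. U $$ (i, t) * W $$ (t, j))"
      using \<open>r < n\<close> by (intro sum.cong) auto
    also have "\<dots> = (U * W) $$ (i, j)"
      using ij U W by (simp add: scalar_prod_def)
    finally show "(U * W) $$ (i, j) = (U' * W') $$ (i, j)" ..
  qed (use U W in \<open>auto simp: U'_def W'_def\<close>)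
  moreover have "det W' = 0"
    using laplace_expansion_row[of W' n r] \<open>r < n\<close> by (simp add: W'_def)
  ultimately show ?thesis
    by (simp add: det_mult[of _ n] U'_def W'_def)
qed

lemma det_smult_one_add_mult:
  fixes U W :: "'a :: field mat"
  assumes U: "U \<in> carrier_mat n r" and W: "W \<in> carrier_mat r n" and "r \<le> n"
  shows "det (\<mu> \<cdot>\<^sub>m 1\<^sub>m n + U * W) = \<mu> ^ (n - r) * det (\<mu> \<cdot>\<^sub>m 1\<^sub>m r + W * U)"
proof (cases "\<mu> = 0")
  case False
  have inv: "(\<mu> \<cdot>\<^sub>m 1\<^sub>m n) * (inverse \<mu> \<cdot>\<^sub>m 1\<^sub>m n) = 1\<^sub>m n"
    using False by (auto simp: mult_smult_assoc_mat mult_smult_distrib smult_smult_assoc)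
  have "W * (inverse \<mu> \<cdot>\<^sub>m 1\<^sub>m n) * U = inverse \<mu> \<cdot>\<^sub>m (W * U)"
    using U W mult_smult_distrib[OF W, of "1\<^sub>m n" n] by (simp add: mult_smult_assoc_mat)
  moreover have "\<mu> \<cdot>\<^sub>m 1\<^sub>m r + W * U = \<mu> \<cdot>\<^sub>m (1\<^sub>m r + inverse \<mu> \<cdot>\<^sub>m (W * U))"
    using U W False by (intro eq_matI) (auto simp: field_simps)
  ultimately show ?thesis
    using det_add_mult_right_inverse[OF _ _ inv U W] U W False \<open>r \<le> n\<close>
    by (simp add: power_diff)
next
  case True
  have zero_smult_one_add: "0 \<cdot>\<^sub>m 1\<^sub>m m + X = X" if "X \<in> carrier_mat m m" for X :: "'a mat" and m
    using that by (intro eq_matI) auto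
  show ?thesis
  proof (cases "r = n")
    case False
    with \<open>r \<le> n\<close> have "det (U * W) = 0"
      using det_mult_eq_0_if_inner_dim_less[OF U W] by simp
    with True False \<open>r \<le> n\<close> U W show ?thesis by (simp add: zero_smult_one_add)
  qed (use True U W det_mult[of U n W] det_mult[of W n U] in \<open>simp add: zero_smult_one_add mult.commute\<close>)
qed

lemma det_diagonal:
  "det (mat m m (\<lambda>(i, j). if i = j then f i else 0) :: 'a :: comm_ring_1 mat) = (\<Prod>i<m. f i)"
  by (subst det_upper_triangular[of _ m])
    (auto simp: diag_mat_def prod.list_conv_set_nth atLeast0LessThan)

lemma det_2:
  fixes A :: "'a :: comm_ring_1 mat"
  assumes "A \<in> carrier_mat 2 2"
  shows "det A = A $$ (0, 0) * A $$ (1, 1) - A $$ (0, 1) * A $$ (1, 0)"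
  using laplace_expansion_row[OF assms, of 0] assms
  by (simp add: cofactor_def det_single mat_delete_def numeral_2_eq_2 lessThan_Suc)

lemma diagonal_mult_mat:
  fixes A :: "'a :: semiring_0 mat"
  assumes "A \<in> carrier_mat m n"
  shows "mat m m (\<lambda>(i, j). if i = j then d i else 0) * A = mat m n (\<lambda>(i, j). d i * A $$ (i, j))"
  using assms by (intro eq_matI) (auto simp: scalar_prod_def if_distrib if_distribR cong: if_cong)

lemma mult_diagonal_mat:
  fixes A :: "'a :: semiring_0 mat"
  assumes "A \<in> carrier_mat n m"
  shows "A * mat m m (\<lambda>(i, j). if i = j then d i else 0) = mat n m (\<lambda>(i, j). A $$ (i, j) * d j)"
  using assms by (intro eq_matI) (auto simp: scalar_prod_def if_distrib cong: if_cong)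

lemma det_diagonal_add_mult:
  fixes U W :: "'a :: field mat"
  assumes d: "\<And>i. i < m \<Longrightarrow> d i \<noteq> 0" and U: "U \<in> carrier_mat m r" and W: "W \<in> carrier_mat r m"
  shows "det (mat m m (\<lambda>(i, j). if i = j then d i else 0) + U * W) =
    (\<Prod>i<m. d i) * det (mat r r (\<lambda>(a, b). (if a = b then 1 else 0) + (\<Sum>i<m. W $$ (a, i) * U $$ (i, b) / d i)))"
proof -
  define D :: "'a mat" where "D = mat m m (\<lambda>(i, j). if i = j then d i else 0)"
  define B :: "'a mat" where "B = mat m m (\<lambda>(i, j). if i = j then inverse (d i) else 0)"
  have "D * B = 1\<^sub>m m"
    unfolding D_def by (subst diagonal_mult_mat[of B m m]) (use d in \<open>auto simp: B_def\<close>)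
  moreover have "1\<^sub>m r + W * B * U =
      mat r r (\<lambda>(a, b). (if a = b then 1 else 0) + (\<Sum>i<m. W $$ (a, i) * U $$ (i, b) / d i))"
    using U W by (auto simp: B_def mult_diagonal_mat scalar_prod_def atLeast0LessThan field_simps
        intro!: eq_matI sum.cong)
  ultimately show ?thesis
    using det_add_mult_right_inverse[of D m B U r W] U W
    by (simp add: D_def B_def det_diagonal)
qed

lemma det_smult_one_add_partition_mat:
  fixes w :: "nat \<Rightarrow> nat \<Rightarrow> 'a :: field"
  assumes g: "\<And>x. x < n \<Longrightarrow> g x < m" and "m \<le> n"
  shows "det (mat n n (\<lambda>(x, y). (if x = y then \<mu> else 0) + w (g x) (g y))) =
    \<mu> ^ (n - m) * det (mat m m (\<lambda>(s, t). (if s = t then \<mu> else 0) + of_nat (card {y. y < n \<and> g y = t}) * w s t))"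
proof -
  define U :: "'a mat" where "U = mat n m (\<lambda>(x, s). if g x = s then 1 else 0)"
  define W where "W = mat m n (\<lambda>(s, y). w s (g y))"
  have U: "U \<in> carrier_mat n m" and W: "W \<in> carrier_mat m n"
    by (simp_all add: U_def W_def)
  have "mat n n (\<lambda>(x, y). (if x = y then \<mu> else 0) + w (g x) (g y)) = \<mu> \<cdot>\<^sub>m 1\<^sub>m n + U * W"
    using g by (intro eq_matI) (auto simp: U_def W_def scalar_prod_def if_distrib if_distribR cong: if_cong)
  moreover have WU: "W * U = mat m m (\<lambda>(s, t). of_nat (card {y. y < n \<and> g y = t}) * w s t)"
  proof (rule eq_matI)
    fix s t assume "s < dim_row (mat m m (\<lambda>(s, t). of_nat (card {y. y < n \<and> g y = t}) * w s t))"
      and "t < dim_col (mat m m (\<lambda>(s, t). of_nat (card {y. y < n \<and> g y = t}) * w s t))"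
    then have st: "s < m" "t < m" by simp_all
    have "(W * U) $$ (s, t) = (\<Sum>y\<in>{0..<n}. if g y = t then w s t else 0)"
      using st by (auto simp: U_def W_def scalar_prod_def intro!: sum.cong)
    also have "\<dots> = (\<Sum>y\<in>{y. y < n \<and> g y = t}. w s t)"
      by (simp add: sum.inter_filter[symmetric] atLeast0LessThan lessThan_def conj_commute)
    finally show "(W * U) $$ (s, t) = mat m m (\<lambda>(s, t). of_nat (card {y. y < n \<and> g y = t}) * w s t) $$ (s, t)"
      using st by simp
  qed (simp_all add: U_def W_def)
  moreover have "\<mu> \<cdot>\<^sub>m 1\<^sub>m m + W * U =
      mat m m (\<lambda>(s, t). (if s = t then \<mu> else 0) + of_nat (card {y. y < n \<and> g y = t}) * w s t)"
    unfolding WU by (intro eq_matI) auto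
  ultimately show ?thesis
    using det_smult_one_add_mult[OF U W \<open>m \<le> n\<close>] by simp
qed

lemma graph_dist_self: "graph_dist E x x = 0"
  unfolding graph_dist_def by (rule Least_equality) (auto intro!: exI[of _ "[x]"] simp: is_walk_def)

lemma walk_length_2_adjacent:
  assumes "is_walk E xs" and "length xs = 2"
  shows "E (hd xs) (last xs)"
proof -
  obtain a b where "xs = [a, b]"
    using \<open>length xs = 2\<close> by (auto simp: numeral_2_eq_2 length_Suc_conv)
  with assms show ?thesis by (auto simp: is_walk_def)
qed

lemma graph_dist_eq_1:
  assumes "x \<noteq> y" and "E x y"
  shows "graph_dist E x y = 1"
  unfolding graph_dist_def
proof (rule Least_equality)
  show "\<exists>xs. is_walk E xs \<and> hd xs = x \<and> last xs = y \<and> length xs = Suc 1"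
    using assms by (intro exI[of _ "[x, y]"]) (auto simp: is_walk_def less_Suc_eq)
next
  fix m assume "\<exists>xs. is_walk E xs \<and> hd xs = x \<and> last xs = y \<and> length xs = Suc m"
  then obtain xs where "hd xs = x" "last xs = y" "length xs = Suc m" by blast
  with \<open>x \<noteq> y\<close> show "1 \<le> m"
    by (cases xs) (auto simp: Suc_le_eq)
qed

lemma graph_dist_eq_2:
  assumes "x \<noteq> y" and "\<not> E x y" and "E x w" and "E w y"
  shows "graph_dist E x y = 2"
  unfolding graph_dist_def
proof (rule Least_equality)
  show "\<exists>xs. is_walk E xs \<and> hd xs = x \<and> last xs = y \<and> length xs = Suc 2"
    using assms by (intro exI[of _ "[x, w, y]"]) (auto simp: is_walk_def less_Suc_eq nth_Cons')
next
  fix m assume "\<exists>xs. is_walk E xs \<and> hd xs = x \<and> last xs = y \<and> length xs = Suc m"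
  then obtain xs where "is_walk E xs" "hd xs = x" "last xs = y" "length xs = Suc m" by blast
  moreover have "m \<noteq> 0" and "m \<noteq> 1"
    using calculation assms(1,2) walk_length_2_adjacent[of E xs] by (auto simp: length_Suc_conv)
  ultimately show "2 \<le> m" by simp
qed

lemma graph_dist_of_hub_partition:
  assumes adj: "\<And>x y. x < n \<Longrightarrow> y < n \<Longrightarrow> x \<noteq> y \<Longrightarrow> E x y \<longleftrightarrow> g x = 0 \<or> g y = 0 \<or> g x = g y"
    and hub: "h < n" "g h = 0"
    and "x < n" "y < n"
  shows "graph_dist E x y = (if x = y then 0 else if g x = 0 \<or> g y = 0 \<or> g x = g y then 1 else 2)"
proof -
  consider "x = y" | "x \<noteq> y" "E x y" | "x \<noteq> y" "\<not> E x y" by blast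
  then show ?thesis
  proof cases
    case 3
    then have "g x \<noteq> 0" "g y \<noteq> 0" "h \<noteq> x" "h \<noteq> y"
      using adj \<open>x < n\<close> \<open>y < n\<close> hub by auto
    then have "E x h" "E h y"
      using adj \<open>x < n\<close> \<open>y < n\<close> hub by auto
    with 3 show ?thesis
      using adj \<open>x < n\<close> \<open>y < n\<close> by (simp add: graph_dist_eq_2)
  qed (use adj \<open>x < n\<close> \<open>y < n\<close> in \<open>auto simp: graph_dist_self graph_dist_eq_1\<close>)
qed

lemma is_K_graph_hub_partition:
  assumes "is_K_graph n k ns E"
  obtains g where "\<And>x. x < n \<Longrightarrow> g x \<le> k"
    and "\<And>s. s \<le> k \<Longrightarrow> card {x. x < n \<and> g x = s} = (if s = 0 then 1 else ns s)"
    and "\<And>x y. x < n \<Longrightarrow> y < n \<Longrightarrow> x \<noteq> y \<Longrightarrow> E x y \<longleftrightarrow> g x = 0 \<or> g y = 0 \<or> g x = g y"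
proof -
  have sym: "E x y \<Longrightarrow> E y x" for x y
    using assms unfolding is_K_graph_def simple_graph_on_def by simp
  from assms[unfolded is_K_graph_def] obtain v C where "v < n" and hub: "\<forall>u<n. u \<noteq> v \<longrightarrow> E v u"
    and C: "\<forall>i\<in>{1..k}. C i \<subseteq> {0..<n} - {v} \<and> card (C i) = ns i"
    and disj: "\<forall>i\<in>{1..k}. \<forall>j\<in>{1..k}. i \<noteq> j \<longrightarrow> C i \<inter> C j = {}"
    and cover: "(\<Union>i\<in>{1..k}. C i) = {0..<n} - {v}"
    and cliques: "\<forall>x\<in>{0..<n} - {v}. \<forall>y\<in>{0..<n} - {v}. x \<noteq> y \<longrightarrow>
              (E x y \<longleftrightarrow> (\<exists>i\<in>{1..k}. x \<in> C i \<and> y \<in> C i))"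
    by (elim conjE exE) (rule that)
  obtain c where c: "\<And>x. x \<in> {0..<n} - {v} \<Longrightarrow> c x \<in> {1..k} \<and> x \<in> C (c x)"
    using cover by (metis UN_iff)
  define g where "g x = (if x = v then 0 else c x)" for x
  have g_eq_iff: "g x = i \<longleftrightarrow> x \<in> C i" if "x < n" "i \<in> {1..k}" for x i
  proof
    show "x \<in> C i" if "g x = i"
      using c[of x] \<open>x < n\<close> \<open>i \<in> {1..k}\<close> \<open>g x = i\<close> by (auto simp: g_def split: if_splits)
    show "g x = i" if "x \<in> C i"
    proof -
      have "x \<noteq> v" using C \<open>i \<in> {1..k}\<close> \<open>x \<in> C i\<close> by blast
      then have "c x \<in> {1..k}" "x \<in> C (c x)" using c \<open>x < n\<close> by auto
      then have "c x = i" using disj \<open>i \<in> {1..k}\<close> \<open>x \<in> C i\<close> by blast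
      with \<open>x \<noteq> v\<close> show ?thesis by (simp add: g_def)
    qed
  qed
  show ?thesis
  proof
    show "g x \<le> k" if "x < n" for x
      using c[of x] that by (auto simp: g_def)
    show "card {x. x < n \<and> g x = s} = (if s = 0 then 1 else ns s)" if "s \<le> k" for s
    proof (cases "s = 0")
      case True
      then have "{x. x < n \<and> g x = s} = {v}"
        using c \<open>v < n\<close> by (force simp: g_def)
      with True show ?thesis by simp
    next
      case False
      with that have "s \<in> {1..k}" by simp
      moreover from this have "C s \<subseteq> {0..<n}"
        using C by blast
      ultimately have "{x. x < n \<and> g x = s} = C s"
        using g_eq_iff[of _ s] by auto
      with False \<open>s \<in> {1..k}\<close> C show ?thesis by simp
    qed
    show "E x y \<longleftrightarrow> g x = 0 \<or> g y = 0 \<or> g x = g y" if "x < n" "y < n" "x \<noteq> y" for x y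
    proof (cases "x = v \<or> y = v")
      case True
      have "g u \<noteq> 0" if "u < n" "u \<noteq> v" for u
        using c[of u] that by (simp add: g_def)
      moreover have "E x y"
        using True that hub sym[of y x] by auto
      ultimately show ?thesis
        using True by (auto simp: g_def)
    next
      case False
      then have "x \<in> {0..<n} - {v}" "y \<in> {0..<n} - {v}" using that by auto
      with cliques \<open>x \<noteq> y\<close> have "E x y \<longleftrightarrow> (\<exists>i\<in>{1..k}. g x = i \<and> g y = i)"
        using g_eq_iff \<open>x < n\<close> \<open>y < n\<close> by simp
      moreover have "g x \<in> {1..k}" "g y \<in> {1..k}"
        using c False \<open>x < n\<close> \<open>y < n\<close> by (auto simp: g_def)
      ultimately show ?thesis by auto
    qed
  qed
qed

lemma sum_lessThan_Suc_eq_first_add: "(\<Sum>i<Suc k. f i) = f 0 + (\<Sum>i=1..k. f i)"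
  by (simp add: lessThan_Suc_atMost atLeast0AtMost[symmetric] sum.atLeast_Suc_atMost)

lemma prod_lessThan_Suc_eq_first_mult: "(\<Prod>i<Suc k. f i) = f 0 * (\<Prod>i=1..k. f i)"
  by (simp add: lessThan_Suc_atMost atLeast0AtMost[symmetric] prod.atLeast_Suc_atMost)

lemma det_hub_cliques_quotient_mat:
  fixes lam :: real and ns :: "nat \<Rightarrow> nat"
  assumes nz: "\<forall>i\<in>{1..k}. lam + real (ns i) + 1 \<noteq> 0"
  shows "det (mat (k + 1) (k + 1) (\<lambda>(s, t). (if s = t then lam + 1 else 0)
      + real (if t = 0 then 1 else ns t) * (if s = 0 \<or> t = 0 \<or> s = t then - 1 else - 2))) =
    (lam - (\<Sum>i=1..k. real (ns i) * (2 * lam + 1) / (lam + real (ns i) + 1)))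
    * (\<Prod>i=1..k. (lam + real (ns i) + 1))"
proof -
  define d where "d i = (if i = 0 then 1 else lam + real (ns i) + 1)" for i
  define U :: "real mat" where "U = mat (k + 1) 2 (\<lambda>(i, a). if a = 0 \<or> i = 0 then 1 else 0)"
  define W :: "real mat" where "W = mat 2 (k + 1) (\<lambda>(a, t).
    if a = 0 then - (if t = 0 then 1 else 2 * real (ns t)) else (if t = 0 then lam else real (ns t)))"
  define S where "S = (\<Sum>i=1..k. real (ns i) / (lam + real (ns i) + 1))"
  have d: "d i \<noteq> 0" if "i < k + 1" for i
    using nz that by (auto simp: d_def)
  have U: "U \<in> carrier_mat (k + 1) 2" and W: "W \<in> carrier_mat 2 (k + 1)"
    by (simp_all add: U_def W_def)
  \<comment> \<open>row 0 is \<open>(\<lambda>, -n\<^sub>1, \<dots>, -n\<^sub>k)\<close>; off the diagonal, every other row agrees with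
    \<open>(-1, -2n\<^sub>1, \<dots>, -2n\<^sub>k)\<close>\<close>
  have decomposition: "mat (k + 1) (k + 1) (\<lambda>(s, t). (if s = t then lam + 1 else 0)
      + real (if t = 0 then 1 else ns t) * (if s = 0 \<or> t = 0 \<or> s = t then - 1 else - 2)) =
    mat (k + 1) (k + 1) (\<lambda>(i, j). if i = j then d i else 0) + U * W"
    by (intro eq_matI) (auto simp: d_def U_def W_def scalar_prod_def numeral_2_eq_2)
  have entry: "(\<Sum>i<Suc k. W $$ (a, i) * U $$ (i, b) / d i) =
      W $$ (a, 0) * U $$ (0, b) + (if a = 0 then - 2 else 1) * (if b = 0 then S else 0)"
    if "a < 2" "b < 2" for a b
  proof -
    have "(\<Sum>i=1..k. W $$ (a, i) * U $$ (i, b) / d i) =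
        (\<Sum>i=1..k. (if a = 0 then - 2 else 1) * (if b = 0 then real (ns i) / (lam + real (ns i) + 1) else 0))"
      using that by (intro sum.cong) (auto simp: U_def W_def d_def)
    then show ?thesis
      by (simp add: sum_lessThan_Suc_eq_first_add d_def S_def sum_distrib_left del: sum.lessThan_Suc)
  qed
  have small: "mat 2 2 (\<lambda>(a, b). (if a = b then 1 else 0) + (\<Sum>i<k + 1. W $$ (a, i) * U $$ (i, b) / d i)) =
    mat 2 2 (\<lambda>(a, b). if a = 0 then (if b = 0 then - 2 * S else - 1) else (if b = 0 then lam + S else lam + 1))"
    by (rule cong_mat) (simp_all add: entry del: sum.lessThan_Suc, auto simp: U_def W_def less_2_cases_iff)
  have prod_d: "(\<Prod>i<k + 1. d i) = (\<Prod>i=1..k. (lam + real (ns i) + 1))"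
    unfolding Suc_eq_plus1[symmetric] prod_lessThan_Suc_eq_first_mult by (auto simp: d_def intro!: prod.cong)
  have sum_S: "(\<Sum>i=1..k. real (ns i) * (2 * lam + 1) / (lam + real (ns i) + 1)) = (2 * lam + 1) * S"
    by (simp add: S_def sum_distrib_left mult.commute)
  have "det (mat (k + 1) (k + 1) (\<lambda>(s, t). (if s = t then lam + 1 else 0)
      + real (if t = 0 then 1 else ns t) * (if s = 0 \<or> t = 0 \<or> s = t then - 1 else - 2))) =
    (\<Prod>i<k + 1. d i) *
      det (mat 2 2 (\<lambda>(a, b). (if a = b then 1 else 0) + (\<Sum>i<k + 1. W $$ (a, i) * U $$ (i, b) / d i)))"
    unfolding decomposition by (rule det_diagonal_add_mult[OF d U W])
  also have "\<dots> = (\<Prod>i=1..k. (lam + real (ns i) + 1)) * (- 2 * S * (lam + 1) + (lam + S))"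
    unfolding small prod_d by (simp add: det_2)
  finally show ?thesis
    unfolding sum_S by (simp add: algebra_simps)
qed

theorem lemma3p4:
  fixes n k :: nat and ns :: "nat \<Rightarrow> nat" and E :: "nat \<Rightarrow> nat \<Rightarrow> bool" and lam :: real
  assumes "k \<ge> 2"
    and "\<forall>i\<in>{1..k}. ns i \<ge> 1"
    and "n = (\<Sum>i=1..k. ns i) + 1"
    and "is_K_graph n k ns E"
    and "\<forall>i\<in>{1..k}. lam + real (ns i) + 1 \<noteq> 0"
  shows "det (lam \<cdot>\<^sub>m 1\<^sub>m n - distance_matrix E n) =
     (lam + 1) ^ (n - k - 1)
     * (lam - (\<Sum>i=1..k. real (ns i) * (2 * lam + 1) / (lam + real (ns i) + 1)))
     * (\<Prod>i=1..k. (lam + real (ns i) + 1))"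
proof -
  obtain g where g_le: "\<And>x. x < n \<Longrightarrow> g x \<le> k"
    and card_g: "\<And>s. s \<le> k \<Longrightarrow> card {x. x < n \<and> g x = s} = (if s = 0 then 1 else ns s)"
    and adj: "\<And>x y. x < n \<Longrightarrow> y < n \<Longrightarrow> x \<noteq> y \<Longrightarrow> E x y \<longleftrightarrow> g x = 0 \<or> g y = 0 \<or> g x = g y"
    using is_K_graph_hub_partition[OF assms(4)] by blast
  obtain h where "h < n" "g h = 0"
    using card_g[of 0] by (metis (mono_tags, lifting) card_1_singletonE le0 mem_Collect_eq singletonI)
  have "k + 1 \<le> n"
    using assms(2,3) sum_mono[of "{1..k}" "\<lambda>_. 1" ns] by simp
  define w :: "nat \<Rightarrow> nat \<Rightarrow> real"
    where "w s t = (if s = 0 \<or> t = 0 \<or> s = t then - 1 else - 2)" for s t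
  have "lam \<cdot>\<^sub>m 1\<^sub>m n - distance_matrix E n =
      mat n n (\<lambda>(x, y). (if x = y then lam + 1 else 0) + w (g x) (g y))"
    using graph_dist_of_hub_partition[of n E g, OF adj \<open>h < n\<close> \<open>g h = 0\<close>]
    by (intro eq_matI) (auto simp: distance_matrix_def w_def)
  then have "det (lam \<cdot>\<^sub>m 1\<^sub>m n - distance_matrix E n) = (lam + 1) ^ (n - (k + 1)) *
      det (mat (k + 1) (k + 1) (\<lambda>(s, t). (if s = t then lam + 1 else 0) + real (card {x. x < n \<and> g x = t}) * w s t))"
    using det_smult_one_add_partition_mat[where m = "k + 1" and w = w and \<mu> = "lam + 1"]
      g_le \<open>k + 1 \<le> n\<close>
    by (simp add: less_Suc_eq_le)
  also have "mat (k + 1) (k + 1) (\<lambda>(s, t). (if s = t then lam + 1 else 0) + real (card {x. x < n \<and> g x = t}) * w s t) =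
      mat (k + 1) (k + 1) (\<lambda>(s, t). (if s = t then lam + 1 else 0) + real (if t = 0 then 1 else ns t) * w s t)"
    by (rule cong_mat) (simp_all add: card_g)
  finally show ?thesis
    using det_hub_cliques_quotient_mat[OF assms(5)] by (simp add: w_def)
qed

end
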